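(* With probability $1-o(n^{-2})$, $\mathbf m_0=e^{-d}m+O(\sqrt m\,\log^3 n)$.
   Context: Setting: $n$ individuals, $k\sim n^{\theta}$ for fixed $\theta\in(0,1)$ of them infected, the set of infected individuals being uniformly random of size $k$; constants $c,d>0$; $m=ck\log(n/k)$ tests and $\Delta=cd\log(n/k)$. Constant-column design: each individual independently is assigned to exactly $\Delta$ distinct tests chosen uniformly at random among the $m$ tests. A test is truly negative if it contains no infected individual; $\mathbf m_0$ denotes the number of truly negative tests. $\log$ natural; asymptotics as $n\to\infty$. *)

theory Defs
  imports "HOL-Probability.Probability"
begin

definition infected_pmf :: "nat \<Rightarrow> nat \<Rightarrow> nat set pmf" where
  "infected_pmf n k = pmf_of_set {S. S \<subseteq> {0..<n} \<and> card S = k}"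

definition ccdesign_pmf :: "nat \<Rightarrow> nat \<Rightarrow> nat \<Rightarrow> (nat \<Rightarrow> nat set) pmf" where
  "ccdesign_pmf n m Delta =
     Pi_pmf {0..<n} {} (\<lambda>_. pmf_of_set {T. T \<subseteq> {0..<m} \<and> card T = Delta})"

definition gt_pmf :: "nat \<Rightarrow> nat \<Rightarrow> nat \<Rightarrow> nat \<Rightarrow> (nat set \<times> (nat \<Rightarrow> nat set)) pmf" where
  "gt_pmf n k m Delta =
     bind_pmf (infected_pmf n k) (\<lambda>\<sigma>. map_pmf (\<lambda>G. (\<sigma>, G)) (ccdesign_pmf n m Delta))"

definition truly_neg :: "nat \<Rightarrow> nat set \<Rightarrow> (nat \<Rightarrow> nat set) \<Rightarrow> nat" where
  "truly_neg m \<sigma> G = card {a \<in> {0..<m}. \<forall>i\<in>\<sigma>. a \<notin> G i}"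

end

theory Submission
  imports Defs "HOL-Real_Asymp.Real_Asymp"
begin

text \<open>Given the infected set, \<open>m\<^sub>0\<close> is a function of the independent test sets of the
  \<open>n\<close> individuals, and redrawing the tests of one individual changes it by at most \<open>\<Delta>\<close> if that
  individual is infected and not at all otherwise. McDiarmid's bounded-differences inequality
  (obtained from Hoeffding's lemma by conditioning on one coordinate at a time) therefore gives
  \<open>P(|m\<^sub>0 - E m\<^sub>0| \<ge> t) \<le> 2 exp(-2t\<^sup>2/(k\<Delta>\<^sup>2))\<close>, where \<open>E m\<^sub>0 = m(1 - \<Delta>/m)\<^sup>k\<close>.
  As \<open>k\<Delta>/m = d + O(1/m)\<close>, this mean is \<open>e\<^sup>-\<^sup>d m + O(log n)\<close>. Taking
  \<open>t = \<surd>m log\<^sup>3 n\<close> and using \<open>m \<ge> k\<Delta>/(2d)\<close>, the tail is at most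
  \<open>2 exp(-log\<^sup>6 n/(d\<Delta>))\<close>, which is \<open>o(n\<^sup>-\<^sup>2)\<close> because \<open>\<Delta> = O(log n)\<close>.\<close>

section \<open>McDiarmid's inequality for finite products of pmfs\<close>

lemma finite_set_Pi_pmf:
  assumes "finite I" "\<And>i. i \<in> I \<Longrightarrow> finite (set_pmf (p i))"
  shows "finite (set_pmf (Pi_pmf I dflt p))"
  using assms by (subst set_Pi_pmf) (auto intro!: finite_PiE_dflt)

lemma expectation_pair_pmf_finite:
  fixes h :: "'a \<times> 'b \<Rightarrow> real"
  assumes "finite (set_pmf A)" "finite (set_pmf B)"
  shows "measure_pmf.expectation (pair_pmf A B) h =
         measure_pmf.expectation A (\<lambda>a. measure_pmf.expectation B (\<lambda>b. h (a, b)))"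
proof -
  have "measure_pmf.expectation (pair_pmf A B) h =
        (\<Sum>z\<in>set_pmf A \<times> set_pmf B. pmf (pair_pmf A B) z *\<^sub>R h z)"
    by (rule integral_measure_pmf) (use assms in auto)
  also have "\<dots> = (\<Sum>a\<in>set_pmf A. pmf A a * (\<Sum>b\<in>set_pmf B. pmf B b * h (a, b)))"
    by (auto simp: sum.cartesian_product pmf_pair sum_distrib_left mult.assoc intro!: sum.cong)
  also have "\<dots> = measure_pmf.expectation A (\<lambda>a. measure_pmf.expectation B (\<lambda>b. h (a, b)))"
    using assms by (simp add: integral_measure_pmf[of "set_pmf _"])
  finally show ?thesis .
qed

lemma expectation_diff_le_pmf:
  fixes f g :: "'a \<Rightarrow> real"
  assumes "finite (set_pmf M)" "\<And>x. x \<in> set_pmf M \<Longrightarrow> f x - g x \<le> c"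
  shows "measure_pmf.expectation M f - measure_pmf.expectation M g \<le> c"
proof -
  have "measure_pmf.expectation M f - measure_pmf.expectation M g
      = measure_pmf.expectation M (\<lambda>x. f x - g x)"
    by (rule Bochner_Integration.integral_diff[symmetric])
       (auto intro!: integrable_measure_pmf_finite assms(1))
  also have "\<dots> \<le> measure_pmf.expectation M (\<lambda>x. c)"
    by (intro integral_mono_AE AE_pmfI assms(2)) (auto intro!: integrable_measure_pmf_finite assms(1))
  finally show ?thesis by simp
qed

lemma Hoeffdings_lemma_pmf:
  fixes g :: "'a \<Rightarrow> real"
  assumes fin: "finite (set_pmf P)" and "l > 0"
    and osc: "\<And>y y'. y \<in> set_pmf P \<Longrightarrow> y' \<in> set_pmf P \<Longrightarrow> g y - g y' \<le> c"
  shows "measure_pmf.expectation P (\<lambda>y. exp (l * (g y - measure_pmf.expectation P g)))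
           \<le> exp (l\<^sup>2 * c\<^sup>2 / 8)"
proof -
  define a where "a = Min (g ` set_pmf P)"
  have "a \<in> g ` set_pmf P"
    unfolding a_def using fin set_pmf_not_empty by (intro Min_in) auto
  then obtain y0 where y0: "y0 \<in> set_pmf P" "a = g y0" by blast
  have "a \<le> g y" if "y \<in> set_pmf P" for y
    unfolding a_def using fin that by (intro Min_le) auto
  then have range: "g y \<in> {a..a + c}" if "y \<in> set_pmf P" for y
    using that osc[OF that y0(1)] y0(2) by auto
  interpret interval_bounded_random_variable "measure_pmf P" g a "a + c"
    by unfold_locales (auto intro!: AE_pmfI range simp del: atLeastAtMost_iff)
  have "ennreal (measure_pmf.expectation P (\<lambda>y. exp (l * (g y - measure_pmf.expectation P g))))
      = (\<integral>\<^sup>+y. exp (l * (g y - measure_pmf.expectation P g)) \<partial>P)"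
    by (rule nn_integral_eq_integral[symmetric]) (auto intro!: integrable_measure_pmf_finite fin)
  also have "\<dots> \<le> ennreal (exp (l\<^sup>2 * (a + c - a)\<^sup>2 / 8))"
    by (rule Hoeffdings_lemma_nn_integral) (use \<open>l > 0\<close> in auto)
  finally show ?thesis by (simp add: ennreal_le_iff)
qed

lemma mgf_pair_pmf_le:
  fixes F :: "'a \<Rightarrow> 'b \<Rightarrow> real"
  assumes finP: "finite (set_pmf P)" and finM: "finite (set_pmf M)" and "l > 0"
    and inner: "\<And>y. y \<in> set_pmf P \<Longrightarrow>
       measure_pmf.expectation M (\<lambda>x. exp (l * (F y x - measure_pmf.expectation M (F y)))) \<le> B"
    and osc: "\<And>y y' x. y \<in> set_pmf P \<Longrightarrow> y' \<in> set_pmf P \<Longrightarrow> x \<in> set_pmf M \<Longrightarrow>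
       F y x - F y' x \<le> c"
  shows "measure_pmf.expectation (pair_pmf P M)
           (\<lambda>(y, x). exp (l * (F y x - measure_pmf.expectation (pair_pmf P M) (\<lambda>(y, x). F y x))))
         \<le> B * exp (l\<^sup>2 * c\<^sup>2 / 8)"
proof -
  \<comment> \<open>Conditionally on \<open>y\<close> the inner factor is at most \<open>B\<close>, and Hoeffding's lemma applies to
    the conditional mean \<open>g\<close>, whose oscillation is at most \<open>c\<close>.\<close>
  define g where "g y = measure_pmf.expectation M (F y)" for y
  define \<mu> where "\<mu> = measure_pmf.expectation (pair_pmf P M) (\<lambda>(y, x). F y x)"
  have \<mu>: "\<mu> = measure_pmf.expectation P g"
    by (simp add: \<mu>_def g_def[abs_def] expectation_pair_pmf_finite[OF finP finM])
  obtain y0 where y0: "y0 \<in> set_pmf P" using set_pmf_not_empty by fast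
  have "0 \<le> measure_pmf.expectation M (\<lambda>x. exp (l * (F y0 x - measure_pmf.expectation M (F y0))))"
    by (intro integral_nonneg_AE) auto
  then have "0 \<le> B" using inner[OF y0] by linarith
  have osc_g: "g y - g y' \<le> c" if "y \<in> set_pmf P" "y' \<in> set_pmf P" for y y'
    unfolding g_def using finM osc[OF that] by (rule expectation_diff_le_pmf)
  have "measure_pmf.expectation (pair_pmf P M) (\<lambda>(y, x). exp (l * (F y x - \<mu>)))
      = measure_pmf.expectation P (\<lambda>y. measure_pmf.expectation M (\<lambda>x. exp (l * (F y x - \<mu>))))"
    by (simp add: expectation_pair_pmf_finite[OF finP finM])
  also have "\<dots> = measure_pmf.expectation P (\<lambda>y. exp (l * (g y - \<mu>)) *
                    measure_pmf.expectation M (\<lambda>x. exp (l * (F y x - g y))))"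
  proof (intro Bochner_Integration.integral_cong refl)
    fix y
    have "exp (l * (F y x - \<mu>)) = exp (l * (g y - \<mu>)) * exp (l * (F y x - g y))" for x
      by (simp add: mult_exp_exp algebra_simps)
    then show "measure_pmf.expectation M (\<lambda>x. exp (l * (F y x - \<mu>))) =
        exp (l * (g y - \<mu>)) * measure_pmf.expectation M (\<lambda>x. exp (l * (F y x - g y)))"
      by simp
  qed
  also have "\<dots> \<le> measure_pmf.expectation P (\<lambda>y. exp (l * (g y - \<mu>)) * B)"
    by (intro integral_mono_AE AE_pmfI mult_left_mono inner[unfolded g_def[symmetric]])
       (auto intro!: integrable_measure_pmf_finite finP)
  also have "\<dots> = B * measure_pmf.expectation P (\<lambda>y. exp (l * (g y - measure_pmf.expectation P g)))"
    by (simp add: \<mu> mult.commute)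
  also have "\<dots> \<le> B * exp (l\<^sup>2 * c\<^sup>2 / 8)"
    by (intro mult_left_mono Hoeffdings_lemma_pmf finP \<open>l > 0\<close> osc_g \<open>0 \<le> B\<close>)
  finally show ?thesis by (simp add: \<mu>_def case_prod_unfold)
qed

definition bounded_differences ::
    "'i set \<Rightarrow> ('i \<Rightarrow> 'b pmf) \<Rightarrow> (('i \<Rightarrow> 'b) \<Rightarrow> real) \<Rightarrow> ('i \<Rightarrow> real) \<Rightarrow> bool" where
  "bounded_differences I p f c \<longleftrightarrow>
     (\<forall>i\<in>I. \<forall>x y. (\<forall>j\<in>I. x j \<in> set_pmf (p j)) \<longrightarrow> (\<forall>j\<in>I. y j \<in> set_pmf (p j)) \<longrightarrow>
        (\<forall>j. j \<noteq> i \<longrightarrow> x j = y j) \<longrightarrow> \<bar>f x - f y\<bar> \<le> c i)"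

lemma bounded_differences_fun_upd:
  assumes "bounded_differences (insert i I) p f c" "i \<notin> I" "y \<in> set_pmf (p i)"
  shows "bounded_differences I p (\<lambda>x. f (x(i := y))) c"
  unfolding bounded_differences_def
proof (intro ballI allI impI)
  fix j x z
  assume "j \<in> I" "\<forall>j\<in>I. x j \<in> set_pmf (p j)" "\<forall>j\<in>I. z j \<in> set_pmf (p j)"
    "\<forall>j'. j' \<noteq> j \<longrightarrow> x j' = z j'"
  then show "\<bar>f (x(i := y)) - f (z(i := y))\<bar> \<le> c j"
    using assms unfolding bounded_differences_def by simp
qed

lemma mcdiarmid_mgf_Pi_pmf:
  fixes f :: "('i \<Rightarrow> 'b) \<Rightarrow> real" and c :: "'i \<Rightarrow> real"
  assumes "finite I" "\<And>i. i \<in> I \<Longrightarrow> finite (set_pmf (p i))" "l > 0"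
    and "bounded_differences I p f c"
  shows "measure_pmf.expectation (Pi_pmf I dflt p)
           (\<lambda>x. exp (l * (f x - measure_pmf.expectation (Pi_pmf I dflt p) f)))
         \<le> exp (l\<^sup>2 * (\<Sum>i\<in>I. (c i)\<^sup>2) / 8)"
  using assms
proof (induction I arbitrary: f rule: finite_induct)
  case empty
  then show ?case by simp
next
  case (insert i I f)
  let ?M = "Pi_pmf I dflt p"
  have fin: "finite (set_pmf (p i))" "finite (set_pmf ?M)"
    using insert by (auto intro!: finite_set_Pi_pmf)
  have in_support: "x j \<in> set_pmf (p j)" if "x \<in> set_pmf ?M" "j \<in> I" for x j
    using that insert.hyps(1) by (auto simp: set_Pi_pmf PiE_dflt_def)
  have split: "measure_pmf.expectation (Pi_pmf (insert i I) dflt p) h =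
      measure_pmf.expectation (pair_pmf (p i) ?M) (\<lambda>(y, x). h (x(i := y)))" for h :: "_ \<Rightarrow> real"
    using insert.hyps by (simp add: Pi_pmf_insert case_prod_unfold)
  have "measure_pmf.expectation (pair_pmf (p i) ?M)
          (\<lambda>(y, x). exp (l * (f (x(i := y)) -
             measure_pmf.expectation (pair_pmf (p i) ?M) (\<lambda>(y, x). f (x(i := y))))))
        \<le> exp (l\<^sup>2 * (\<Sum>i\<in>I. (c i)\<^sup>2) / 8) * exp (l\<^sup>2 * (c i)\<^sup>2 / 8)"
  proof (rule mgf_pair_pmf_le[OF fin \<open>l > 0\<close>])
    fix y assume y: "y \<in> set_pmf (p i)"
    have "bounded_differences I p (\<lambda>x. f (x(i := y))) c"
      using insert.prems(3) insert.hyps(2) y by (rule bounded_differences_fun_upd)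
    moreover have "\<And>j. j \<in> I \<Longrightarrow> finite (set_pmf (p j))"
      using insert.prems(1) by simp
    ultimately show "measure_pmf.expectation ?M (\<lambda>x. exp (l * (f (x(i := y)) -
                 measure_pmf.expectation ?M (\<lambda>x. f (x(i := y))))))
               \<le> exp (l\<^sup>2 * (\<Sum>i\<in>I. (c i)\<^sup>2) / 8)"
      using insert.IH insert.prems(2) by blast
  next
    fix y y' x assume "y \<in> set_pmf (p i)" "y' \<in> set_pmf (p i)" "x \<in> set_pmf ?M"
    then have "\<bar>f (x(i := y)) - f (x(i := y'))\<bar> \<le> c i"
      using in_support insert.prems(3) unfolding bounded_differences_def by simp
    then show "f (x(i := y)) - f (x(i := y')) \<le> c i" by linarith
  qed
  then show ?case
    using insert.hyps by (simp add: split mult_exp_exp add_divide_distrib algebra_simps)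
qed

lemma mcdiarmid_upper_tail_Pi_pmf:
  fixes f :: "('i \<Rightarrow> 'b) \<Rightarrow> real" and c :: "'i \<Rightarrow> real"
  assumes "finite I" "\<And>i. i \<in> I \<Longrightarrow> finite (set_pmf (p i))" "t > 0" "(\<Sum>i\<in>I. (c i)\<^sup>2) > 0"
    and "bounded_differences I p f c"
  shows "measure_pmf.prob (Pi_pmf I dflt p)
           {x. f x - measure_pmf.expectation (Pi_pmf I dflt p) f \<ge> t}
         \<le> exp (- 2 * t\<^sup>2 / (\<Sum>i\<in>I. (c i)\<^sup>2))"
proof -
  define S where "S = (\<Sum>i\<in>I. (c i)\<^sup>2)"
  define M where "M = Pi_pmf I dflt p"
  define \<mu> where "\<mu> = measure_pmf.expectation M f"
  define l where "l = 4 * t / S" \<comment> \<open>minimises \<open>l\<^sup>2 S / 8 - l t\<close>\<close>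
  have "S > 0" using assms unfolding S_def by auto
  then have "l > 0" using \<open>t > 0\<close> by (simp add: l_def)
  have "measure_pmf.prob M {x. f x - \<mu> \<ge> t}
      = measure_pmf.prob M {x \<in> space (measure_pmf M). exp (l * (f x - \<mu>)) \<ge> exp (l * t)}"
    using \<open>l > 0\<close> by simp
  also have "\<dots> \<le> measure_pmf.expectation M (\<lambda>x. exp (l * (f x - \<mu>))) / exp (l * t)"
    by (rule integral_Markov_inequality_measure)
       (auto intro!: integrable_measure_pmf_finite finite_set_Pi_pmf assms simp: M_def)
  also have "\<dots> \<le> exp (l\<^sup>2 * S / 8) / exp (l * t)"
    unfolding M_def \<mu>_def S_def
    by (intro divide_right_mono mcdiarmid_mgf_Pi_pmf[OF assms(1,2) \<open>l > 0\<close> assms(5)]) auto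
  also have "\<dots> = exp (- 2 * t\<^sup>2 / S)"
    using \<open>S > 0\<close> by (simp add: l_def exp_diff [symmetric] field_simps power2_eq_square)
  finally show ?thesis unfolding S_def M_def \<mu>_def .
qed

lemma mcdiarmid_Pi_pmf:
  fixes f :: "('i \<Rightarrow> 'b) \<Rightarrow> real" and c :: "'i \<Rightarrow> real"
  assumes "finite I" "\<And>i. i \<in> I \<Longrightarrow> finite (set_pmf (p i))" "t > 0" "(\<Sum>i\<in>I. (c i)\<^sup>2) > 0"
    and bdd: "bounded_differences I p f c"
  shows "measure_pmf.prob (Pi_pmf I dflt p)
           {x. \<bar>f x - measure_pmf.expectation (Pi_pmf I dflt p) f\<bar> \<ge> t}
         \<le> 2 * exp (- 2 * t\<^sup>2 / (\<Sum>i\<in>I. (c i)\<^sup>2))"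
proof -
  define M where "M = Pi_pmf I dflt p"
  define \<mu> where "\<mu> = measure_pmf.expectation M f"
  define b where "b = exp (- 2 * t\<^sup>2 / (\<Sum>i\<in>I. (c i)\<^sup>2))"
  have upper: "measure_pmf.prob M {x. f x - \<mu> \<ge> t} \<le> b"
    unfolding M_def \<mu>_def b_def by (rule mcdiarmid_upper_tail_Pi_pmf[OF assms])
  have "measure_pmf.prob M {x. - f x - measure_pmf.expectation M (\<lambda>x. - f x) \<ge> t} \<le> b"
    unfolding M_def b_def
    using bdd by (intro mcdiarmid_upper_tail_Pi_pmf[OF assms(1-4)])
      (auto simp: bounded_differences_def abs_minus_commute)
  then have lower: "measure_pmf.prob M {x. \<mu> - f x \<ge> t} \<le> b"
    by (simp add: \<mu>_def)
  have "measure_pmf.prob M {x. \<bar>f x - \<mu>\<bar> \<ge> t}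
      \<le> measure_pmf.prob M ({x. f x - \<mu> \<ge> t} \<union> {x. \<mu> - f x \<ge> t})"
    by (intro measure_pmf.finite_measure_mono) auto
  also have "\<dots> \<le> measure_pmf.prob M {x. f x - \<mu> \<ge> t} + measure_pmf.prob M {x. \<mu> - f x \<ge> t}"
    by (rule measure_Un_le) auto
  finally show ?thesis using upper lower unfolding M_def \<mu>_def b_def by linarith
qed

section \<open>Truly negative tests in the constant-column design\<close>

lemma measure_bind_pmf_le:
  assumes "\<And>x. x \<in> set_pmf M \<Longrightarrow> measure_pmf.prob (N x) X \<le> b"
  shows "measure_pmf.prob (bind_pmf M N) X \<le> b"
proof -
  obtain x0 where "x0 \<in> set_pmf M" using set_pmf_not_empty by fast
  then have "0 \<le> b" using assms[of x0] measure_nonneg[of "N x0" X] by linarith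
  have "ennreal (measure_pmf.prob (bind_pmf M N) X) = (\<integral>\<^sup>+x. emeasure (N x) X \<partial>M)"
    by (simp add: measure_pmf.emeasure_eq_measure[symmetric])
  also have "\<dots> \<le> (\<integral>\<^sup>+x. ennreal b \<partial>M)"
    by (intro nn_integral_mono_AE AE_pmfI)
       (simp add: measure_pmf.emeasure_eq_measure assms ennreal_leI)
  finally show ?thesis using \<open>0 \<le> b\<close> by (simp add: ennreal_le_iff)
qed

definition ksubsets :: "'a set \<Rightarrow> nat \<Rightarrow> 'a set set" where
  "ksubsets A k = {T. T \<subseteq> A \<and> card T = k}"

lemma finite_ksubsets: "finite A \<Longrightarrow> finite (ksubsets A k)"
  unfolding ksubsets_def by (rule finite_subset[of _ "Pow A"]) auto

lemma ksubsets_nonempty: "finite A \<Longrightarrow> k \<le> card A \<Longrightarrow> ksubsets A k \<noteq> {}"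
  unfolding ksubsets_def by (metis (mono_tags, lifting) empty_Collect_eq obtain_subset_with_card_n)

lemma card_ksubsets: "finite A \<Longrightarrow> card (ksubsets A k) = card A choose k"
  unfolding ksubsets_def by (rule n_subsets)

lemma set_pmf_of_ksubsets:
  "finite A \<Longrightarrow> k \<le> card A \<Longrightarrow> set_pmf (pmf_of_set (ksubsets A k)) = ksubsets A k"
  by (simp add: finite_ksubsets ksubsets_nonempty)

lemma prob_ksubset_avoids:
  assumes "finite A" "a \<in> A" "k \<le> card A"
  shows "measure_pmf.prob (pmf_of_set (ksubsets A k)) {T. a \<notin> T} = 1 - real k / real (card A)"
proof -
  have "ksubsets A k \<inter> {T. a \<notin> T} = ksubsets (A - {a}) k"
    unfolding ksubsets_def by auto
  then have "measure_pmf.prob (pmf_of_set (ksubsets A k)) {T. a \<notin> T}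
      = real ((card A - 1) choose k) / real (card A choose k)"
    using assms by (simp add: measure_pmf_of_set finite_ksubsets ksubsets_nonempty card_ksubsets)
  also have "\<dots> = 1 - real k / real (card A)"
  proof -
    have "real (card A - k) * real (card A choose k) = real (card A) * real ((card A - 1) choose k)"
      by (metis binomial_absorb_comp of_nat_mult)
    moreover have "card A > 0" using assms card_gt_0_iff by blast
    ultimately show ?thesis using assms(3) by (simp add: field_simps of_nat_diff)
  qed
  finally show ?thesis .
qed

lemma infected_pmf_eq: "infected_pmf n k = pmf_of_set (ksubsets {0..<n} k)"
  by (simp add: infected_pmf_def ksubsets_def)

lemma ccdesign_pmf_eq:
  "ccdesign_pmf n m Delta = Pi_pmf {0..<n} {} (\<lambda>_. pmf_of_set (ksubsets {0..<m} Delta))"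
  by (simp add: ccdesign_pmf_def ksubsets_def)

lemma prob_ccdesign_avoids_test:
  assumes "\<sigma> \<subseteq> {0..<n}" "a < m" "Delta \<le> m"
  shows "measure_pmf.prob (ccdesign_pmf n m Delta) {G. \<forall>i\<in>\<sigma>. a \<notin> G i}
           = (1 - real Delta / real m) ^ card \<sigma>"
proof -
  have "{G. \<forall>i\<in>\<sigma>. a \<notin> G i} = Pi {0..<n} (\<lambda>i. if i \<in> \<sigma> then {T. a \<notin> T} else UNIV)"
    using assms(1) by (auto simp: Pi_def)
  then have "measure_pmf.prob (ccdesign_pmf n m Delta) {G. \<forall>i\<in>\<sigma>. a \<notin> G i}
      = (\<Prod>i\<in>{0..<n}. measure_pmf.prob (pmf_of_set (ksubsets {0..<m} Delta))
                          (if i \<in> \<sigma> then {T. a \<notin> T} else UNIV))"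
    by (simp add: ccdesign_pmf_eq measure_Pi_pmf_Pi)
  also have "\<dots> = (\<Prod>i\<in>{0..<n}. if i \<in> \<sigma> then 1 - real Delta / real m else 1)"
    using assms by (intro prod.cong) (auto simp: prob_ksubset_avoids)
  also have "\<dots> = (1 - real Delta / real m) ^ card \<sigma>"
    using assms(1) by (simp add: prod.If_cases Int_absorb1)
  finally show ?thesis .
qed

lemma truly_neg_eq_sum_indicator:
  "real (truly_neg m \<sigma> G) = (\<Sum>a\<in>{0..<m}. indicator {G. \<forall>i\<in>\<sigma>. a \<notin> G i} G)"
  unfolding truly_neg_def indicator_def by (simp add: Int_def)

lemma expectation_truly_neg:
  assumes "\<sigma> \<subseteq> {0..<n}" "Delta \<le> m"
  shows "measure_pmf.expectation (ccdesign_pmf n m Delta) (\<lambda>G. real (truly_neg m \<sigma> G))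
           = real m * (1 - real Delta / real m) ^ card \<sigma>"
proof -
  have "measure_pmf.expectation (ccdesign_pmf n m Delta) (\<lambda>G. real (truly_neg m \<sigma> G))
      = (\<Sum>a\<in>{0..<m}. measure_pmf.prob (ccdesign_pmf n m Delta) {G. \<forall>i\<in>\<sigma>. a \<notin> G i})"
    unfolding truly_neg_eq_sum_indicator
    by (subst Bochner_Integration.integral_sum) (auto simp: measure_pmf.emeasure_eq_measure)
  also have "\<dots> = (\<Sum>a\<in>{0..<m}. (1 - real Delta / real m) ^ card \<sigma>)"
    using assms by (intro sum.cong) (auto simp: prob_ccdesign_avoids_test)
  finally show ?thesis by simp
qed

lemma truly_neg_le_of_update:
  assumes "i \<in> \<sigma>" "finite (G' i)" "\<forall>j. j \<noteq> i \<longrightarrow> G j = G' j"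
  shows "truly_neg m \<sigma> G \<le> truly_neg m \<sigma> G' + card (G' i)"
proof -
  have "{a \<in> {0..<m}. \<forall>j\<in>\<sigma>. a \<notin> G j} \<subseteq> {a \<in> {0..<m}. \<forall>j\<in>\<sigma>. a \<notin> G' j} \<union> G' i"
    using assms(1,3) by auto metis
  then have "truly_neg m \<sigma> G \<le> card ({a \<in> {0..<m}. \<forall>j\<in>\<sigma>. a \<notin> G' j} \<union> G' i)"
    unfolding truly_neg_def by (rule card_mono[rotated]) (use assms(2) in auto)
  also have "\<dots> \<le> truly_neg m \<sigma> G' + card (G' i)"
    unfolding truly_neg_def by (rule card_Un_le)
  finally show ?thesis .
qed

lemma truly_neg_bounded_difference:
  assumes "G i \<in> ksubsets A Delta" "G' i \<in> ksubsets A Delta" "finite A"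
    and "\<forall>j. j \<noteq> i \<longrightarrow> G j = G' j"
  shows "\<bar>real (truly_neg m \<sigma> G) - real (truly_neg m \<sigma> G')\<bar> \<le> (if i \<in> \<sigma> then real Delta else 0)"
proof (cases "i \<in> \<sigma>")
  case True
  have "finite (G i)" "finite (G' i)" "card (G i) = Delta" "card (G' i) = Delta"
    using assms(1-3) by (auto simp: ksubsets_def intro: finite_subset)
  then show ?thesis
    using True truly_neg_le_of_update[of i \<sigma> G' G m] truly_neg_le_of_update[of i \<sigma> G G' m] assms(4)
    by fastforce
next
  case False
  then have "truly_neg m \<sigma> G = truly_neg m \<sigma> G'"
    unfolding truly_neg_def using assms(4) by metis
  then show ?thesis using False by simp
qed

lemma truly_neg_concentration:
  assumes "\<sigma> \<subseteq> {0..<n}" "\<sigma> \<noteq> {}" "1 \<le> Delta" "Delta \<le> m" "t > 0"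
  shows "measure_pmf.prob (ccdesign_pmf n m Delta)
           {G. \<bar>real (truly_neg m \<sigma> G) - real m * (1 - real Delta / real m) ^ card \<sigma>\<bar> \<ge> t}
         \<le> 2 * exp (- 2 * t\<^sup>2 / (real (card \<sigma>) * (real Delta)\<^sup>2))"
proof -
  define c where "c i = (if i \<in> \<sigma> then real Delta else 0)" for i
  have sum_c: "(\<Sum>i\<in>{0..<n}. (c i)\<^sup>2) = real (card \<sigma>) * (real Delta)\<^sup>2"
    using assms(1) by (simp add: c_def if_distrib[of "\<lambda>x. x\<^sup>2"] sum.If_cases Int_absorb1)
  have "finite \<sigma>" using assms(1) finite_subset by blast
  then have pos: "0 < (\<Sum>i\<in>{0..<n}. (c i)\<^sup>2)"
    using assms(2,3) by (simp add: sum_c card_gt_0_iff)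
  have "measure_pmf.prob (ccdesign_pmf n m Delta)
      {G. \<bar>real (truly_neg m \<sigma> G)
           - measure_pmf.expectation (ccdesign_pmf n m Delta) (\<lambda>G. real (truly_neg m \<sigma> G))\<bar> \<ge> t}
      \<le> 2 * exp (- 2 * t\<^sup>2 / (\<Sum>i\<in>{0..<n}. (c i)\<^sup>2))"
    unfolding ccdesign_pmf_eq
  proof (rule mcdiarmid_Pi_pmf)
    show "bounded_differences {0..<n} (\<lambda>_. pmf_of_set (ksubsets {0..<m} Delta))
            (\<lambda>G. real (truly_neg m \<sigma> G)) c"
      unfolding bounded_differences_def
    proof (intro ballI allI impI)
      fix i and G G' :: "nat \<Rightarrow> nat set"
      assume "i \<in> {0..<n}" "\<forall>j\<in>{0..<n}. G j \<in> set_pmf (pmf_of_set (ksubsets {0..<m} Delta))"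
        "\<forall>j\<in>{0..<n}. G' j \<in> set_pmf (pmf_of_set (ksubsets {0..<m} Delta))"
        "\<forall>j. j \<noteq> i \<longrightarrow> G j = G' j"
      then show "\<bar>real (truly_neg m \<sigma> G) - real (truly_neg m \<sigma> G')\<bar> \<le> c i"
        unfolding c_def using assms(4)
        by (intro truly_neg_bounded_difference) (auto simp: set_pmf_of_ksubsets)
    qed
  qed (use assms(4,5) pos in \<open>auto simp: finite_ksubsets set_pmf_of_ksubsets\<close>)
  then show ?thesis
    using assms(1,4) by (simp add: expectation_truly_neg sum_c)
qed

lemma gt_pmf_truly_neg_concentration:
  assumes "1 \<le> k" "k \<le> n" "1 \<le> Delta" "Delta \<le> m" "t > 0"
  shows "measure_pmf.prob (gt_pmf n k m Delta)
           {(\<sigma>, G). \<bar>real (truly_neg m \<sigma> G) - real m * (1 - real Delta / real m) ^ k\<bar> \<ge> t}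
         \<le> 2 * exp (- 2 * t\<^sup>2 / (real k * (real Delta)\<^sup>2))"
  unfolding gt_pmf_def
proof (rule measure_bind_pmf_le)
  fix \<sigma> assume "\<sigma> \<in> set_pmf (infected_pmf n k)"
  then have "\<sigma> \<in> ksubsets {0..<n} k"
    using assms(2) by (simp add: infected_pmf_eq set_pmf_of_ksubsets)
  then have "\<sigma> \<subseteq> {0..<n}" "card \<sigma> = k" by (simp_all add: ksubsets_def)
  moreover from this have "\<sigma> \<noteq> {}" using assms(1) by auto
  ultimately show "measure_pmf.prob (map_pmf (Pair \<sigma>) (ccdesign_pmf n m Delta))
      {(\<sigma>, G). \<bar>real (truly_neg m \<sigma> G) - real m * (1 - real Delta / real m) ^ k\<bar> \<ge> t}
      \<le> 2 * exp (- 2 * t\<^sup>2 / (real k * (real Delta)\<^sup>2))"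
    using truly_neg_concentration[of \<sigma> n Delta m t] assms by (simp add: vimage_def)
qed

section \<open>Deviation from \<open>e\<^sup>-\<^sup>d m\<close>\<close>

lemma abs_exp_diff_le_nonpos:
  fixes u v :: real
  assumes "u \<le> 0" "v \<le> 0"
  shows "\<bar>exp u - exp v\<bar> \<le> \<bar>u - v\<bar>"
proof -
  have *: "exp x - exp y \<le> x - y" if "y \<le> x" "x \<le> 0" for x y :: real
  proof -
    have "exp x * (1 + (y - x)) \<le> exp x * exp (y - x)"
      by (intro mult_left_mono exp_ge_add_one_self) auto
    then have "exp x - exp y \<le> exp x * (x - y)"
      by (simp add: mult_exp_exp algebra_simps)
    also have "\<dots> \<le> x - y"
      using that by (intro mult_left_le_one_le) auto
    finally show ?thesis .
  qed
  show ?thesis using *[of v u] *[of u v] assms by (cases "v \<le> u") auto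
qed

lemma power_one_minus_approx_exp:
  fixes p :: real
  assumes "0 \<le> p" "p \<le> 1/2"
  shows "\<bar>(1 - p) ^ k - exp (- (real k * p))\<bar> \<le> 2 * real k * p\<^sup>2"
proof -
  define u where "u = real k * ln (1 - p)"
  have "(1 - p) ^ k = exp u"
    using assms by (simp add: u_def exp_of_nat_mult[symmetric] ln_realpow[symmetric])
  have "- p - 2 * p\<^sup>2 \<le> ln (1 - p)"
    by (rule ln_one_minus_pos_lower_bound) (use assms in auto)
  then have lower: "real k * (- p - 2 * p\<^sup>2) \<le> u"
    unfolding u_def by (intro mult_left_mono) auto
  have "ln (1 - p) \<le> - p"
    using ln_le_minus_one[of "1 - p"] assms by simp
  then have upper: "u \<le> - (real k * p)"
    using mult_left_mono[of "ln (1 - p)" "- p" "real k"] unfolding u_def by simp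
  have "\<bar>exp u - exp (- (real k * p))\<bar> \<le> \<bar>u - - (real k * p)\<bar>"
    using upper assms by (intro abs_exp_diff_le_nonpos) (auto intro: order_trans)
  also have "\<dots> \<le> 2 * real k * p\<^sup>2"
    using lower upper by (simp add: algebra_simps)
  finally show ?thesis using \<open>(1 - p) ^ k = exp u\<close> by simp
qed

lemma power_one_minus_div_approx_exp:
  fixes d M D :: real
  assumes "d > 0" "1 \<le> D" "2 * D \<le> M" and km: "\<bar>M - real k * D / d\<bar> \<le> 1"
  shows "\<bar>M * (1 - D / M) ^ k - exp (- d) * M\<bar> \<le> 4 * d * D + d"
proof -
  define p where "p = D / M"
  have "M \<ge> 2" "0 < p" "p \<le> 1/2"
    using assms by (auto simp: p_def field_simps)
  have kD: "real k * D \<le> d * (2 * M)"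
  proof -
    have "real k * D \<le> d * (M + 1)" using km \<open>d > 0\<close> by (simp add: field_simps abs_le_iff)
    also have "\<dots> \<le> d * (2 * M)" using \<open>d > 0\<close> \<open>M \<ge> 2\<close> by (intro mult_left_mono) auto
    finally show ?thesis .
  qed
  have "2 * real k * p\<^sup>2 = 2 * (real k * D) * D / M\<^sup>2"
    by (simp add: p_def power2_eq_square)
  also have "\<dots> \<le> 2 * (d * (2 * M)) * D / M\<^sup>2"
    using kD assms by (intro divide_right_mono mult_right_mono mult_left_mono) auto
  also have "\<dots> = 4 * d * D / M" using \<open>M \<ge> 2\<close> by (simp add: power2_eq_square)
  finally have quadratic: "2 * real k * p\<^sup>2 \<le> 4 * d * D / M" .
  have "\<bar>real k * p - d\<bar> = d * \<bar>real k * D / d - M\<bar> / M"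
    using \<open>d > 0\<close> \<open>M \<ge> 2\<close> by (simp add: p_def field_simps flip: abs_mult)
  also have "\<dots> \<le> d / M"
    using km \<open>d > 0\<close> \<open>M \<ge> 2\<close> by (simp add: divide_right_mono abs_minus_commute)
  finally have linear: "\<bar>real k * p - d\<bar> \<le> d / M" .
  have "\<bar>(1 - p) ^ k - exp (- d)\<bar>
      \<le> \<bar>(1 - p) ^ k - exp (- (real k * p))\<bar> + \<bar>exp (- (real k * p)) - exp (- d)\<bar>"
    by linarith
  also have "\<dots> \<le> 2 * real k * p\<^sup>2 + \<bar>real k * p - d\<bar>"
    using power_one_minus_approx_exp[of p k] abs_exp_diff_le_nonpos[of "- (real k * p)" "- d"]
      \<open>0 < p\<close> \<open>p \<le> 1/2\<close> \<open>d > 0\<close> by simp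
  also have "\<dots> \<le> (4 * d * D + d) / M"
    using quadratic linear by (simp add: add_divide_distrib)
  finally have "M * \<bar>(1 - p) ^ k - exp (- d)\<bar> \<le> 4 * d * D + d"
    using \<open>M \<ge> 2\<close> by (simp add: field_simps)
  moreover have "\<bar>M * (1 - D / M) ^ k - exp (- d) * M\<bar> = M * \<bar>(1 - p) ^ k - exp (- d)\<bar>"
    using \<open>M \<ge> 2\<close> by (simp add: p_def abs_mult right_diff_distrib[symmetric] mult.commute)
  ultimately show ?thesis by simp
qed

lemma num_tests_lower_bounds:
  fixes d :: real
  assumes "d > 0" "1 \<le> Delta" "4 * d \<le> real k" "\<bar>real m - real k * real Delta / d\<bar> \<le> 1"
  shows "2 * real Delta \<le> real m" "real k * real Delta \<le> 2 * d * real m"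
proof -
  have "4 * d * real Delta \<le> real k * real Delta"
    using assms(2,3) by (intro mult_right_mono) auto
  then have "4 * real Delta \<le> real k * real Delta / d"
    using \<open>d > 0\<close> by (simp add: field_simps)
  moreover have "real k * real Delta / d - 1 \<le> real m" "1 \<le> real Delta"
    using assms(2,4) by (auto simp: abs_le_iff)
  ultimately have "2 * real Delta \<le> real m" "real k * real Delta / d \<le> 2 * real m"
    by linarith+
  then show "2 * real Delta \<le> real m" "real k * real Delta \<le> 2 * d * real m"
    using \<open>d > 0\<close> by (simp_all add: field_simps)
qed

lemma truly_neg_deviation_bound:
  fixes d D L :: real
  assumes "d > 0" "1 \<le> k" "k \<le> n" "1 \<le> Delta" "4 * d \<le> real k"
    and m: "\<bar>real m - real k * real Delta / d\<bar> \<le> 1"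
    and D: "real Delta \<le> D" and L: "4 * d * D + d \<le> L ^ 3"
  shows "measure_pmf.prob (gt_pmf n k m Delta)
           {(\<sigma>, G). \<bar>real (truly_neg m \<sigma> G) - exp (- d) * real m\<bar> > 2 * sqrt (real m) * L ^ 3}
         \<le> 2 * exp (- (L ^ 6 / (d * D)))"
proof -
  note m_lower = num_tests_lower_bounds[OF \<open>d > 0\<close> assms(4,5) m]
  define \<mu> where "\<mu> = real m * (1 - real Delta / real m) ^ k"
  define t where "t = sqrt (real m) * L ^ 3"
  have "\<bar>\<mu> - exp (- d) * real m\<bar> \<le> 4 * d * real Delta + d"
    unfolding \<mu>_def using power_one_minus_div_approx_exp[OF \<open>d > 0\<close> _ m_lower(1) m] assms(4)
    by simp
  also have "\<dots> \<le> L ^ 3"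
    using D L \<open>d > 0\<close> by (smt (verit) mult_left_mono)
  finally have mean: "\<bar>\<mu> - exp (- d) * real m\<bar> \<le> L ^ 3" .
  then have "0 < L ^ 3" using L D assms(1,4) by (smt (verit) mult_nonneg_nonneg of_nat_0_le_iff)
  moreover have "1 \<le> sqrt (real m)" using m_lower(1) assms(4) by simp
  ultimately have "0 < t" "L ^ 3 \<le> t" unfolding t_def
    by (simp_all add: mult_le_cancel_right1)
  have "{(\<sigma>, G). \<bar>real (truly_neg m \<sigma> G) - exp (- d) * real m\<bar> > 2 * sqrt (real m) * L ^ 3}
      \<subseteq> {(\<sigma>, G). \<bar>real (truly_neg m \<sigma> G) - \<mu>\<bar> \<ge> t}"
    using mean \<open>L ^ 3 \<le> t\<close> unfolding t_def by auto
  then have "measure_pmf.prob (gt_pmf n k m Delta)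
           {(\<sigma>, G). \<bar>real (truly_neg m \<sigma> G) - exp (- d) * real m\<bar> > 2 * sqrt (real m) * L ^ 3}
      \<le> measure_pmf.prob (gt_pmf n k m Delta) {(\<sigma>, G). \<bar>real (truly_neg m \<sigma> G) - \<mu>\<bar> \<ge> t}"
    by (intro measure_pmf.finite_measure_mono) auto
  also have "\<dots> \<le> 2 * exp (- 2 * t\<^sup>2 / (real k * (real Delta)\<^sup>2))"
    unfolding \<mu>_def using assms \<open>0 < t\<close> m_lower(1)
    by (intro gt_pmf_truly_neg_concentration) auto
  also have "\<dots> \<le> 2 * exp (- (L ^ 6 / (d * D)))"
  proof -
    have "L ^ 6 / (d * D) \<le> L ^ 6 / (d * real Delta)"
      using D assms(1,4) by (intro divide_left_mono mult_left_mono mult_pos_pos) auto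
    also have "\<dots> = real k * real Delta * L ^ 6 / (d * (real k * (real Delta)\<^sup>2))"
      using assms(2,4) by (simp add: power2_eq_square)
    also have "\<dots> \<le> 2 * d * real m * L ^ 6 / (d * (real k * (real Delta)\<^sup>2))"
      using m_lower(2) assms(1) by (intro divide_right_mono mult_right_mono) auto
    also have "\<dots> = 2 * t\<^sup>2 / (real k * (real Delta)\<^sup>2)"
      using assms(1) by (simp add: t_def power_mult_distrib flip: power_mult)
    finally show ?thesis by simp
  qed
  finally show ?thesis .
qed

lemma eventually_infected_count_bounds:
  fixes \<theta> B :: real
  assumes "0 < \<theta>" "\<theta> < 1" and k: "(\<lambda>n. real (k n) / real n powr \<theta>) \<longlonglongrightarrow> 1"
  shows "eventually (\<lambda>n. B \<le> real (k n) \<and> k n \<le> n \<and>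
           (1 - \<theta>) * ln (real n) - ln 2 \<le> ln (real n / real (k n))) sequentially"
proof -
  have "eventually (\<lambda>n. 1/2 < real (k n) / real n powr \<theta> \<and> real (k n) / real n powr \<theta> < 2) sequentially"
    by (intro eventually_conj order_tendstoD[OF k]) auto
  moreover have "eventually (\<lambda>n. 2 * B \<le> real n powr \<theta> \<and> 2 * real n powr \<theta> \<le> real n \<and> 1 \<le> real n) sequentially"
    using assms(1,2) by (intro eventually_conj; real_asymp)
  ultimately show ?thesis
  proof eventually_elim
    case (elim n)
    then have pos: "0 < real n powr \<theta>" "0 < real n" by auto
    then have k_lower: "real n powr \<theta> / 2 < real (k n)" and k_upper: "real (k n) < 2 * real n powr \<theta>"
      using elim by (simp_all add: field_simps)
    have "(1 - \<theta>) * ln (real n) - ln 2 = ln (real n / (2 * real n powr \<theta>))"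
      using pos by (simp add: ln_div ln_mult ln_powr algebra_simps)
    also have "\<dots> \<le> ln (real n / real (k n))"
      using pos k_lower k_upper by (intro ln_mono divide_left_mono) auto
    finally show ?case using elim k_lower k_upper by auto
  qed
qed

lemma eventually_Delta_bounds:
  fixes \<theta> c d :: real
  assumes "0 < \<theta>" "\<theta> < 1" "c > 0" "d > 0"
    and k: "(\<lambda>n. real (k n) / real n powr \<theta>) \<longlonglongrightarrow> 1"
    and Delta: "eventually (\<lambda>n. \<bar>real (Delta n) - c * d * ln (real n / real (k n))\<bar> \<le> 1) sequentially"
  shows "eventually (\<lambda>n. 1 \<le> Delta n \<and> real (Delta n) \<le> c * d * ln (real n) + 1) sequentially"
proof -
  have "eventually (\<lambda>n. 2 \<le> c * d * ((1 - \<theta>) * ln (real n) - ln 2)) sequentially"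
    using assms(2-4) by real_asymp
  with eventually_infected_count_bounds[OF assms(1,2) k, of 1] Delta show ?thesis
  proof eventually_elim
    case (elim n)
    then have "0 < real (k n)" "real (k n) \<le> real n" by auto
    then have "ln (real n / real (k n)) \<le> ln (real n)"
      by (simp add: ln_div)
    moreover have "2 \<le> c * d * ln (real n / real (k n))"
      using elim assms(3,4) by (smt (verit) mult_left_mono mult_pos_pos)
    ultimately show ?case
      using elim assms(3,4) by (smt (verit) mult_left_mono mult_pos_pos of_nat_1 of_nat_le_iff)
  qed
qed

theorem lemmaA4:
  fixes \<theta> c d :: real and k m Delta :: "nat \<Rightarrow> nat"
  assumes theta: "0 < \<theta>" "\<theta> < 1"
    and cd: "c > 0" "d > 0"
    and k_asymp: "(\<lambda>n. real (k n) / real n powr \<theta>) \<longlonglongrightarrow> 1"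
    and Delta_def: "eventually (\<lambda>n. \<bar>real (Delta n) - c * d * ln (real n / real (k n))\<bar> \<le> 1) sequentially"
    and m_def: "eventually (\<lambda>n. \<bar>real (m n) - real (k n) * real (Delta n) / d\<bar> \<le> 1) sequentially"
  shows "\<exists>C. (\<lambda>n. real n ^ 2 *
            measure_pmf.prob (gt_pmf n (k n) (m n) (Delta n))
              {(\<sigma>, G). \<bar>real (truly_neg (m n) \<sigma> G) - exp (- d) * real (m n)\<bar>
                        > C * sqrt (real (m n)) * ln (real n) ^ 3}) \<longlonglongrightarrow> 0"
proof -
  let ?P = "\<lambda>n. measure_pmf.prob (gt_pmf n (k n) (m n) (Delta n))
              {(\<sigma>, G). \<bar>real (truly_neg (m n) \<sigma> G) - exp (- d) * real (m n)\<bar>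
                        > 2 * sqrt (real (m n)) * ln (real n) ^ 3}"
  define b where "b n = 2 * real n ^ 2 * exp (- (ln (real n) ^ 6 / (d * (c * d * ln (real n) + 1))))"
    for n :: nat
  have "b \<longlonglongrightarrow> 0" unfolding b_def using cd by real_asymp
  have "eventually (\<lambda>n. 4 * d * (c * d * ln (real n) + 1) + d \<le> ln (real n) ^ 3) sequentially"
    using cd by real_asymp
  with eventually_infected_count_bounds[OF theta k_asymp, of "4 * d + 1"]
       eventually_Delta_bounds[OF theta cd k_asymp Delta_def] m_def
  have bound: "eventually (\<lambda>n. real n ^ 2 * ?P n \<le> b n) sequentially"
  proof eventually_elim
    case (elim n)
    have "?P n \<le> 2 * exp (- (ln (real n) ^ 6 / (d * (c * d * ln (real n) + 1))))"
      using elim cd by (intro truly_neg_deviation_bound) auto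
    from mult_left_mono[OF this, of "real n ^ 2"] show ?case by (simp add: b_def mult_ac)
  qed
  show ?thesis
    by (rule exI[of _ 2], rule tendsto_sandwich[OF _ bound tendsto_const \<open>b \<longlonglongrightarrow> 0\<close>]) auto
qed

end
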